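(* Let $L>0$ and let $\phi$ satisfy (H_φ), (H_int), (H_bdd). Define $\psi(s)=\int_0^s\phi(t)\,dt$ for $s\in\mathbb{R}$. If $z\in H^1(0,L)$ and $\phi(z)\in L^2(0,L)$, then $\psi(z)\in W^{1,1}(0,L)$ with $\frac{d\psi(z)}{dx}=\phi(z)\frac{dz}{dx}$ in $\mathcal D'(0,L)$; in particular $\int_0^L\phi(z)\frac{dz}{dx}\,dx=\psi(z(L))-\psi(z(0))$.
   Context: (H_φ): $\phi:\mathbb{R}\to\mathbb{R}\cup\{+\infty\}$ is continuous when $\mathbb{R}\cup\{+\infty\}$ carries its usual topology, and $\phi(s)<+\infty$ for every $s\neq0$. (H_int): $\int_0^\delta\phi(t)\,dt<+\infty$ and $\int_{-\delta}^0\phi(t)\,dt<+\infty$ for every $\delta\in(0,1)$. (H_bdd): for every $\delta>0$, $\phi$ is bounded (and continuous) on $\mathbb{R}\setminus(-\delta,\delta)$. Functions in $H^1(0,L)$ are identified with their continuous representatives. *)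

theory Defs
  imports "HOL-Analysis.Analysis"
begin

definition smooth_fun :: "(real \<Rightarrow> real) \<Rightarrow> bool" where
  "smooth_fun f \<longleftrightarrow> (\<forall>k x. ((deriv ^^ k) f) differentiable (at x))"

definition test_fun :: "real \<Rightarrow> real \<Rightarrow> (real \<Rightarrow> real) \<Rightarrow> bool" where
  "test_fun a b \<phi> \<longleftrightarrow> smooth_fun \<phi> \<and>
     (\<exists>c d. a < c \<and> c \<le> d \<and> d < b \<and> (\<forall>x. x \<notin> {c..d} \<longrightarrow> \<phi> x = 0))"

definition L1_on :: "real set \<Rightarrow> (real \<Rightarrow> real) \<Rightarrow> bool" where
  "L1_on S f \<longleftrightarrow> set_integrable lborel S f"

definition L2_on :: "real set \<Rightarrow> (real \<Rightarrow> real) \<Rightarrow> bool" where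
  "L2_on S f \<longleftrightarrow> set_borel_measurable lborel S f \<and> set_integrable lborel S (\<lambda>x. (f x)\<^sup>2)"

definition weak_deriv_on :: "real \<Rightarrow> real \<Rightarrow> (real \<Rightarrow> real) \<Rightarrow> (real \<Rightarrow> real) \<Rightarrow> bool" where
  "weak_deriv_on a b f g \<longleftrightarrow>
     (\<forall>c d. a < c \<and> d < b \<longrightarrow> set_integrable lborel {c..d} f \<and> set_integrable lborel {c..d} g) \<and>
     (\<forall>\<phi>. test_fun a b \<phi> \<longrightarrow>
        (LINT x:{a<..<b}|lborel. f x * deriv \<phi> x) = - (LINT x:{a<..<b}|lborel. g x * \<phi> x))"

definition W11_on :: "real \<Rightarrow> real \<Rightarrow> (real \<Rightarrow> real) \<Rightarrow> bool" where
  "W11_on a b f \<longleftrightarrow> L1_on {a<..<b} f \<and> (\<exists>g. L1_on {a<..<b} g \<and> weak_deriv_on a b f g)"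

definition H_phi :: "(real \<Rightarrow> ereal) \<Rightarrow> bool" where
  "H_phi \<phi> \<longleftrightarrow> continuous_on UNIV \<phi> \<and> (\<forall>s. \<phi> s \<noteq> -\<infinity>) \<and> (\<forall>s. s \<noteq> 0 \<longrightarrow> \<phi> s < \<infinity>)"

definition H_int :: "(real \<Rightarrow> ereal) \<Rightarrow> bool" where
  "H_int \<phi> \<longleftrightarrow> (\<forall>\<delta>. 0 < \<delta> \<and> \<delta> < 1 \<longrightarrow>
     set_integrable lborel {0<..<\<delta>} (\<lambda>t. real_of_ereal (\<phi> t)) \<and>
     set_integrable lborel {-\<delta><..<0} (\<lambda>t. real_of_ereal (\<phi> t)))"

definition H_bdd :: "(real \<Rightarrow> ereal) \<Rightarrow> bool" where
  "H_bdd \<phi> \<longleftrightarrow> (\<forall>\<delta>>0. \<exists>M. \<forall>s. \<bar>s\<bar> \<ge> \<delta> \<longrightarrow> \<bar>\<phi> s\<bar> \<le> ereal M)"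

definition psi :: "(real \<Rightarrow> ereal) \<Rightarrow> real \<Rightarrow> real" where
  "psi \<phi> s = interval_lebesgue_integral lborel (ereal 0) (ereal s) (\<lambda>t. real_of_ereal (\<phi> t))"

end

theory Submission
  imports Defs "HOL-Computational_Algebra.Polynomial"
begin

text \<open>
  A weak derivative \<open>z'\<close> of a continuous \<open>z\<close> is a genuine derivative in the sense of
  absolute continuity: testing against smooth plateau functions, whose derivatives are two
  mollifiers, shows that \<open>z - \<integral>z'\<close> is constant, so \<open>z y - z x = \<integral>\<^sub>x\<^sup>y z'\<close>.
  For the truncations \<open>\<phi>\<^sub>n = min \<phi> n\<close>, which are continuous and real-valued, \<open>\<psi>\<^sub>n\<close> is
  \<open>C\<^sup>1\<close> and the chain rule for absolutely continuous functions gives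
  \<open>\<psi>\<^sub>n (z y) - \<psi>\<^sub>n (z x) = \<integral>\<^sub>x\<^sup>y \<phi>\<^sub>n(z) z'\<close>. Letting \<open>n \<rightarrow> \<infinity>\<close>, dominated convergence
  applies on both sides: by (H_int) on the left, and with the majorant \<open>|\<phi>(z) z'|\<close> on the
  right, which is integrable because \<open>\<phi>(z)\<close> and \<open>z'\<close> are square integrable and which
  dominates \<open>\<phi>\<^sub>n(z) z'\<close> wherever \<open>\<phi>(z)\<close> is finite, i.e. almost everywhere.
  So \<open>\<psi>(z)\<close> is absolutely continuous with derivative \<open>\<phi>(z) z'\<close>, and integrating by
  parts against test functions turns this into the weak derivative.
\<close>

section \<open>Smooth functions and plateau test functions\<close>

definition differentiable_upto :: "nat \<Rightarrow> (real \<Rightarrow> real) \<Rightarrow> bool" where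
  "differentiable_upto k f \<longleftrightarrow> (\<forall>j\<le>k. \<forall>x. ((deriv ^^ j) f) differentiable (at x))"

lemma smooth_fun_iff_differentiable_upto: "smooth_fun f \<longleftrightarrow> (\<forall>k. differentiable_upto k f)"
  unfolding smooth_fun_def differentiable_upto_def by blast

lemma differentiable_upto_0: "differentiable_upto 0 f \<longleftrightarrow> (\<forall>x. f differentiable (at x))"
  unfolding differentiable_upto_def by simp

lemma differentiable_upto_Suc:
  "differentiable_upto (Suc k) f \<longleftrightarrow> (\<forall>x. f differentiable (at x)) \<and> differentiable_upto k (deriv f)"
proof -
  have "(\<forall>j\<le>Suc k. P j) \<longleftrightarrow> P 0 \<and> (\<forall>j\<le>k. P (Suc j))" for P
    by (metis Suc_le_mono le0 not0_implies_Suc)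
  then show ?thesis
    unfolding differentiable_upto_def by (simp add: funpow_Suc_right del: funpow.simps)
qed

lemma differentiable_upto_mono: "differentiable_upto k f \<Longrightarrow> j \<le> k \<Longrightarrow> differentiable_upto j f"
  unfolding differentiable_upto_def by auto

lemma real_differentiable_imp_field_differentiable:
  "(f :: real \<Rightarrow> real) differentiable (at x) \<Longrightarrow> f field_differentiable (at x)"
  by (metis DERIV_deriv_iff_real_differentiable DERIV_deriv_iff_field_differentiable)

lemma has_real_derivative_compose_affine:
  fixes f :: "real \<Rightarrow> real"
  assumes "f differentiable (at (a * x + b))"
  shows "((\<lambda>x. f (a * x + b)) has_real_derivative a * deriv f (a * x + b)) (at x)"
proof -
  have "(f has_real_derivative deriv f (a * x + b)) (at (a * x + b))"
    using assms DERIV_deriv_iff_real_differentiable by blast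
  then have "((\<lambda>x. f (a * x + b)) has_real_derivative deriv f (a * x + b) * a) (at x)"
    by (rule DERIV_chain2) (auto intro!: derivative_eq_intros)
  then show ?thesis by (simp add: mult.commute)
qed

lemma differentiable_upto_add:
  "differentiable_upto k f \<Longrightarrow> differentiable_upto k g \<Longrightarrow> differentiable_upto k (\<lambda>x. f x + g x)"
proof (induction k arbitrary: f g)
  case (Suc k)
  then have "deriv (\<lambda>x. f x + g x) = (\<lambda>x. deriv f x + deriv g x)"
    by (intro ext deriv_add) (auto simp: differentiable_upto_Suc real_differentiable_imp_field_differentiable)
  with Suc show ?case by (auto simp: differentiable_upto_Suc)
qed (auto simp: differentiable_upto_0)

lemma differentiable_upto_cmult:
  "differentiable_upto k f \<Longrightarrow> differentiable_upto k (\<lambda>x. c * f x)"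
proof (induction k arbitrary: f)
  case (Suc k)
  then have "deriv (\<lambda>x. c * f x) = (\<lambda>x. c * deriv f x)"
    by (intro ext deriv_cmult) (auto simp: differentiable_upto_Suc real_differentiable_imp_field_differentiable)
  with Suc show ?case by (auto simp: differentiable_upto_Suc)
qed (auto simp: differentiable_upto_0)

lemma differentiable_upto_mult:
  "differentiable_upto k f \<Longrightarrow> differentiable_upto k g \<Longrightarrow> differentiable_upto k (\<lambda>x. f x * g x)"
proof (induction k arbitrary: f g)
  case (Suc k)
  have f: "\<forall>x. f differentiable (at x)" "differentiable_upto k (deriv f)" "differentiable_upto k f"
    using Suc.prems(1) differentiable_upto_mono[OF Suc.prems(1)] by (auto simp: differentiable_upto_Suc)
  have g: "\<forall>x. g differentiable (at x)" "differentiable_upto k (deriv g)" "differentiable_upto k g"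
    using Suc.prems(2) differentiable_upto_mono[OF Suc.prems(2)] by (auto simp: differentiable_upto_Suc)
  have "deriv (\<lambda>x. f x * g x) = (\<lambda>x. deriv f x * g x + f x * deriv g x)"
    using f(1) g(1) by (intro ext) (simp add: deriv_mult real_differentiable_imp_field_differentiable)
  with f g show ?case
    by (auto simp: differentiable_upto_Suc intro!: differentiable_upto_add Suc.IH)
qed (auto simp: differentiable_upto_0)

lemma differentiable_upto_compose_affine:
  "differentiable_upto k f \<Longrightarrow> differentiable_upto k (\<lambda>x. f (a * x + b))"
proof (induction k arbitrary: f)
  case 0
  then show ?case
    by (metis differentiable_upto_0 has_real_derivative_compose_affine real_differentiable_def)
next
  case (Suc k)
  then have f: "\<forall>x. f differentiable (at x)" by (auto simp: differentiable_upto_Suc)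
  then have "(\<lambda>x. f (a * x + b)) differentiable (at x)" for x
    by (metis has_real_derivative_compose_affine real_differentiable_def)
  moreover have "deriv (\<lambda>x. f (a * x + b)) = (\<lambda>x. a * deriv f (a * x + b))"
    using f by (intro ext DERIV_imp_deriv has_real_derivative_compose_affine) simp
  ultimately show ?case
    using Suc by (auto simp: differentiable_upto_Suc intro!: differentiable_upto_cmult)
qed

lemma smooth_fun_add: "smooth_fun f \<Longrightarrow> smooth_fun g \<Longrightarrow> smooth_fun (\<lambda>x. f x + g x)"
  and smooth_fun_mult: "smooth_fun f \<Longrightarrow> smooth_fun g \<Longrightarrow> smooth_fun (\<lambda>x. f x * g x)"
  and smooth_fun_cmult: "smooth_fun f \<Longrightarrow> smooth_fun (\<lambda>x. c * f x)"
  and smooth_fun_compose_affine: "smooth_fun f \<Longrightarrow> smooth_fun (\<lambda>x. f (a * x + b))"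
  by (auto simp: smooth_fun_iff_differentiable_upto differentiable_upto_add differentiable_upto_mult
      differentiable_upto_cmult differentiable_upto_compose_affine)

lemma smooth_fun_differentiable: "smooth_fun f \<Longrightarrow> f differentiable (at x)"
  unfolding smooth_fun_def by (metis funpow_0)

lemma smooth_fun_has_real_derivative: "smooth_fun f \<Longrightarrow> (f has_real_derivative deriv f x) (at x)"
  using smooth_fun_differentiable DERIV_deriv_iff_real_differentiable by blast

lemma smooth_fun_continuous_on: "smooth_fun f \<Longrightarrow> continuous_on S f"
  by (metis continuous_at_imp_continuous_on differentiable_imp_continuous_within smooth_fun_differentiable)

lemma smooth_fun_deriv: "smooth_fun f \<Longrightarrow> smooth_fun (deriv f)"
  unfolding smooth_fun_iff_differentiable_upto by (metis differentiable_upto_Suc)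

definition flat_exp_poly :: "real poly \<Rightarrow> real \<Rightarrow> real" where
  "flat_exp_poly p x = (if x \<le> 0 then 0 else poly p (1 / x) * exp (- 1 / x))"

lemma poly_times_exp_minus_tendsto_0:
  fixes p :: "real poly"
  shows "((\<lambda>u. poly p u * exp (- u)) \<longlongrightarrow> 0) at_top"
proof -
  have "((\<lambda>u. \<Sum>i\<le>degree p. coeff p i * (u ^ i / exp u)) \<longlongrightarrow> (\<Sum>i\<le>degree p. coeff p i * 0)) at_top"
    by (intro tendsto_sum tendsto_mult tendsto_const tendsto_power_div_exp_0)
  then show ?thesis
    by (simp add: poly_altdef sum_distrib_right exp_minus divide_inverse mult.assoc)
qed

lemma poly_inverse_times_exp_tendsto_0:
  fixes p :: "real poly"
  shows "((\<lambda>h. poly p (1 / h) * exp (- 1 / h)) \<longlongrightarrow> 0) (at_right 0)"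
  using filterlim_compose[OF poly_times_exp_minus_tendsto_0 filterlim_inverse_at_top_right]
  by (simp add: divide_inverse)

lemma flat_exp_poly_has_real_derivative:
  "(flat_exp_poly p has_real_derivative flat_exp_poly ([:0, 0, 1:] * (p - pderiv p)) x) (at x)"
proof (cases x "0 :: real" rule: linorder_cases)
  case greater
  have "((\<lambda>x. poly p (1 / x) * exp (- 1 / x)) has_real_derivative
          poly (pderiv p) (1 / x) * (- 1 / x\<^sup>2) * exp (- 1 / x) + poly p (1 / x) * (exp (- 1 / x) * (1 / x\<^sup>2))) (at x)"
    using greater
    by (auto intro!: derivative_eq_intros DERIV_chain2[OF poly_DERIV] simp: power2_eq_square field_simps)
  then have "((\<lambda>x. poly p (1 / x) * exp (- 1 / x)) has_real_derivative
          flat_exp_poly ([:0, 0, 1:] * (p - pderiv p)) x) (at x)"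
    using greater by (simp add: flat_exp_poly_def power2_eq_square field_simps)
  then show ?thesis
    by (rule has_field_derivative_transform_within_open[of _ _ _ "{0<..}"])
      (use greater in \<open>auto simp: flat_exp_poly_def\<close>)
next
  case less
  have "((\<lambda>_. 0) has_real_derivative flat_exp_poly ([:0, 0, 1:] * (p - pderiv p)) x) (at x)"
    using less by (simp add: flat_exp_poly_def)
  then show ?thesis
    by (rule has_field_derivative_transform_within_open[of _ _ _ "{..<0}"])
      (use less in \<open>auto simp: flat_exp_poly_def\<close>)
next
  case equal
  have "((\<lambda>h. (flat_exp_poly p h - flat_exp_poly p 0) / h) \<longlongrightarrow> 0) (at 0)"
  proof (rule filterlim_split_at)
    have "\<forall>\<^sub>F h in at_left (0::real). 0 = (flat_exp_poly p h - flat_exp_poly p 0) / h"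
      by (rule eventually_at_leftI[of "-1"]) (auto simp: flat_exp_poly_def)
    then show "((\<lambda>h. (flat_exp_poly p h - flat_exp_poly p 0) / h) \<longlongrightarrow> 0) (at_left 0)"
      by (rule Lim_transform_eventually[rotated]) simp
    have "\<forall>\<^sub>F h in at_right (0::real).
            poly ([:0, 1:] * p) (1 / h) * exp (- 1 / h) = (flat_exp_poly p h - flat_exp_poly p 0) / h"
      by (rule eventually_at_rightI[of _ 1]) (auto simp: flat_exp_poly_def)
    with poly_inverse_times_exp_tendsto_0
    show "((\<lambda>h. (flat_exp_poly p h - flat_exp_poly p 0) / h) \<longlongrightarrow> 0) (at_right 0)"
      by (rule Lim_transform_eventually)
  qed
  then show ?thesis
    using equal by (simp add: has_field_derivative_iff flat_exp_poly_def)
qed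

lemma smooth_fun_flat_exp_poly: "smooth_fun (flat_exp_poly p)"
proof -
  have "\<exists>q. (deriv ^^ k) (flat_exp_poly p) = flat_exp_poly q" for k
  proof (induction k)
    case (Suc k)
    then obtain q where "(deriv ^^ k) (flat_exp_poly p) = flat_exp_poly q" by blast
    then show ?case
      using flat_exp_poly_has_real_derivative by (auto intro!: ext DERIV_imp_deriv)
  qed auto
  then show ?thesis
    using flat_exp_poly_has_real_derivative unfolding smooth_fun_def
    by (metis real_differentiable_def)
qed

definition bump :: "real \<Rightarrow> real" where
  "bump x = flat_exp_poly 1 x * flat_exp_poly 1 (1 - x)"

lemma smooth_fun_bump: "smooth_fun bump"
proof -
  have "smooth_fun (\<lambda>x. flat_exp_poly 1 x * flat_exp_poly 1 ((- 1) * x + 1))"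
    by (intro smooth_fun_mult smooth_fun_compose_affine smooth_fun_flat_exp_poly)
  then show ?thesis by (simp add: bump_def[abs_def])
qed

lemma bump_nonneg: "0 \<le> bump x"
  by (simp add: bump_def flat_exp_poly_def)

lemma bump_eq_0: "x \<le> 0 \<or> 1 \<le> x \<Longrightarrow> bump x = 0"
  by (auto simp: bump_def flat_exp_poly_def)

lemma bump_pos: "0 < x \<Longrightarrow> x < 1 \<Longrightarrow> 0 < bump x"
  by (simp add: bump_def flat_exp_poly_def)

definition bump_primitive :: "real \<Rightarrow> real" where
  "bump_primitive s = integral {-1..s} bump"

lemma bump_primitive_eq_0: "s \<le> 0 \<Longrightarrow> bump_primitive s = 0"
  unfolding bump_primitive_def by (subst integral_cong[where g = "\<lambda>_. 0"]) (auto intro: bump_eq_0)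

lemma bump_primitive_has_real_derivative: "(bump_primitive has_real_derivative bump s) (at s)"
proof (cases "s < 0")
  case True
  have "((\<lambda>_. 0) has_real_derivative bump s) (at s)"
    using True bump_eq_0 by simp
  then show ?thesis
    by (rule has_field_derivative_transform_within_open[of _ _ _ "{..<0}"])
      (use True bump_primitive_eq_0 in auto)
next
  case False
  have "((\<lambda>u. integral {-1..u} bump) has_vector_derivative bump s) (at s within {-1..s+1})"
    using False by (intro integral_has_vector_derivative smooth_fun_continuous_on smooth_fun_bump) auto
  moreover have "at s within {-1..s+1} = at s"
    using False by (intro at_within_interior) auto
  ultimately show ?thesis
    by (simp add: bump_primitive_def[abs_def] has_real_derivative_iff_has_vector_derivative)
qed

lemma bump_primitive_eq_1: "1 \<le> s \<Longrightarrow> bump_primitive s = bump_primitive 1"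
proof -
  assume s: "1 \<le> s"
  have "integral {-1..1} bump + integral {1..s} bump = integral {-1..s} bump"
    using s smooth_fun_continuous_on[OF smooth_fun_bump]
    by (intro Henstock_Kurzweil_Integration.integral_combine integrable_continuous_interval) auto
  moreover have "integral {1..s} bump = 0"
    by (subst integral_cong[where g = "\<lambda>_. 0"]) (auto intro: bump_eq_0)
  ultimately show ?thesis by (simp add: bump_primitive_def)
qed

lemma bump_primitive_1_pos: "0 < bump_primitive 1"
proof -
  obtain x where "0 < x" "x < 1" "bump_primitive 1 - bump_primitive 0 = (1 - 0) * bump x"
    using MVT2[of 0 1 bump_primitive bump] bump_primitive_has_real_derivative by auto
  then show ?thesis
    using bump_pos bump_primitive_eq_0[of 0] by auto
qed

lemma smooth_fun_bump_primitive: "smooth_fun bump_primitive"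
proof -
  have "deriv bump_primitive = bump"
    using bump_primitive_has_real_derivative by (intro ext DERIV_imp_deriv)
  moreover have "\<forall>x. bump_primitive differentiable (at x)"
    using bump_primitive_has_real_derivative real_differentiable_def by blast
  ultimately have "differentiable_upto k bump_primitive" for k
    using smooth_fun_bump
    by (cases k) (simp_all add: differentiable_upto_0 differentiable_upto_Suc smooth_fun_iff_differentiable_upto)
  then show ?thesis by (simp add: smooth_fun_iff_differentiable_upto)
qed

definition smooth_step :: "real \<Rightarrow> real" where
  "smooth_step s = bump_primitive s / bump_primitive 1"

lemma smooth_fun_smooth_step: "smooth_fun smooth_step"
  using smooth_fun_cmult[OF smooth_fun_bump_primitive, of "1 / bump_primitive 1"]
  by (simp add: smooth_step_def[abs_def])

lemma smooth_step_eq_0: "s \<le> 0 \<Longrightarrow> smooth_step s = 0"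
  by (simp add: smooth_step_def bump_primitive_eq_0)

lemma smooth_step_eq_1: "1 \<le> s \<Longrightarrow> smooth_step s = 1"
  using bump_primitive_1_pos bump_primitive_eq_1[of s] by (simp add: smooth_step_def)

definition mollifier :: "real \<Rightarrow> real \<Rightarrow> real \<Rightarrow> real" where
  "mollifier a e t = bump ((t - a) / e) / (e * bump_primitive 1)"

lemma smooth_step_rescaled_has_real_derivative:
  assumes "0 < e"
  shows "((\<lambda>t. smooth_step ((t - a) / e)) has_real_derivative mollifier a e t) (at t)"
proof -
  have "((\<lambda>t. smooth_step ((t - a) / e)) has_real_derivative bump ((t - a) / e) / bump_primitive 1 * (1 / e)) (at t)"
    unfolding smooth_step_def
    by (rule DERIV_chain2[where f = "\<lambda>s. bump_primitive s / bump_primitive 1"])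
      (use assms bump_primitive_1_pos in \<open>auto intro!: derivative_eq_intros bump_primitive_has_real_derivative\<close>)
  then show ?thesis
    by (simp add: mollifier_def mult.commute)
qed

lemma mollifier_nonneg: "0 < e \<Longrightarrow> 0 \<le> mollifier a e t"
  using bump_nonneg bump_primitive_1_pos by (simp add: mollifier_def)

lemma mollifier_eq_0:
  assumes "0 < e" "t \<notin> {a<..<a + e}"
  shows "mollifier a e t = 0"
proof -
  have "(t - a) / e \<le> 0 \<or> 1 \<le> (t - a) / e"
    using assms by (auto simp: divide_nonpos_pos le_divide_eq)
  then show ?thesis by (simp add: mollifier_def bump_eq_0)
qed

lemma continuous_on_mollifier: "e \<noteq> 0 \<Longrightarrow> continuous_on S (mollifier a e)"
  unfolding mollifier_def[abs_def]
  by (intro continuous_on_divide continuous_on_const continuous_on_compose2[OF smooth_fun_continuous_on[OF smooth_fun_bump]]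
      continuous_intros) (use bump_primitive_1_pos in auto)

lemma integral_mollifier:
  assumes "0 < e" "c \<le> a" "a + e \<le> d"
  shows "integral {c..d} (mollifier a e) = 1"
proof -
  have "(mollifier a e has_integral smooth_step ((d - a) / e) - smooth_step ((c - a) / e)) {c..d}"
    using assms smooth_step_rescaled_has_real_derivative[OF assms(1)]
    by (intro fundamental_theorem_of_calculus)
      (auto intro: has_field_derivative_at_within simp: has_real_derivative_iff_has_vector_derivative[symmetric])
  moreover have "smooth_step ((d - a) / e) = 1" "smooth_step ((c - a) / e) = 0"
    using assms by (auto intro!: smooth_step_eq_1 smooth_step_eq_0 simp: le_divide_eq divide_nonpos_pos)
  ultimately show ?thesis
    by (simp add: integral_unique)
qed

definition plateau :: "real \<Rightarrow> real \<Rightarrow> real \<Rightarrow> real \<Rightarrow> real" where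
  "plateau a b e t = smooth_step ((t - a) / e) - smooth_step ((t - b) / e)"

lemma deriv_plateau: "0 < e \<Longrightarrow> deriv (plateau a b e) = (\<lambda>t. mollifier a e t - mollifier b e t)"
  unfolding plateau_def[abs_def]
  by (intro ext DERIV_imp_deriv DERIV_diff smooth_step_rescaled_has_real_derivative)

lemma test_fun_plateau:
  assumes "0 < e" "c < a" "a \<le> b" "b + e < d"
  shows "test_fun c d (plateau a b e)"
proof -
  have "smooth_fun (\<lambda>t. smooth_step ((1 / e) * t + (- a / e)) + (- 1) * smooth_step ((1 / e) * t + (- b / e)))"
    by (intro smooth_fun_add smooth_fun_cmult smooth_fun_compose_affine smooth_fun_smooth_step)
  then have "smooth_fun (plateau a b e)"
    by (simp add: plateau_def[abs_def] diff_divide_distrib)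
  moreover have "plateau a b e t = 0" if "t \<notin> {a..b + e}" for t
  proof (cases "t < a")
    case True
    then show ?thesis
      using assms by (simp add: plateau_def smooth_step_eq_0 divide_nonpos_pos)
  next
    case False
    then show ?thesis
      using assms that by (simp add: plateau_def smooth_step_eq_1 le_divide_eq)
  qed
  ultimately show ?thesis
    unfolding test_fun_def using assms by (intro conjI exI[of _ a] exI[of _ "b + e"]) auto
qed

section \<open>Absolutely continuous primitives\<close>

text \<open>\<open>primitive_on a b F f\<close>: \<open>F\<close> is an indefinite integral of the absolutely integrable
  \<open>f\<close> on \<open>[a, b]\<close>, i.e. \<open>F\<close> is absolutely continuous with derivative \<open>f\<close>; this is how
  \<open>W\<^sup>1\<^sup>,\<^sup>1(a, b)\<close> functions are handled below.\<close>

definition primitive_on :: "real \<Rightarrow> real \<Rightarrow> (real \<Rightarrow> real) \<Rightarrow> (real \<Rightarrow> real) \<Rightarrow> bool" where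
  "primitive_on a b F f \<longleftrightarrow> f absolutely_integrable_on {a..b} \<and>
     (\<forall>x y. a \<le> x \<longrightarrow> x \<le> y \<longrightarrow> y \<le> b \<longrightarrow> F y - F x = integral {x..y} f)"

lemma integral_Icc_diff:
  fixes f :: "real \<Rightarrow> real"
  assumes "f integrable_on {a..b}" "a \<le> x" "x \<le> y" "y \<le> b"
  shows "integral {x..y} f = integral {a..y} f - integral {a..x} f"
proof -
  have "f integrable_on {a..y}"
    using assms by (intro integrable_subinterval_real[OF assms(1)]) auto
  with assms(2,3) show ?thesis
    by (simp add: Henstock_Kurzweil_Integration.integral_combine[symmetric])
qed

lemma primitive_onD:
  "primitive_on a b F f \<Longrightarrow> a \<le> x \<Longrightarrow> x \<le> y \<Longrightarrow> y \<le> b \<Longrightarrow> F y - F x = integral {x..y} f"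
  by (simp add: primitive_on_def)

lemma primitive_on_integrable:
  assumes "primitive_on a b F f" "{x..y} \<subseteq> {a..b}"
  shows "f integrable_on {x..y}"
proof -
  have "f integrable_on {a..b}"
    using assms(1) unfolding primitive_on_def by (auto intro: set_lebesgue_integral_eq_integral(1))
  then show ?thesis
    using assms(2) by (rule integrable_subinterval_real)
qed

lemma primitive_on_indefinite_integral:
  assumes "f absolutely_integrable_on {a..b}"
  shows "primitive_on a b (\<lambda>t. integral {a..t} f) f"
  unfolding primitive_on_def
proof (intro conjI allI impI)
  have "f integrable_on {a..b}"
    using assms by (rule set_lebesgue_integral_eq_integral(1))
  then show "integral {a..y} f - integral {a..x} f = integral {x..y} f"
    if "a \<le> x" "x \<le> y" "y \<le> b" for x y
    using integral_Icc_diff that by metis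
qed (fact assms)

lemma primitive_on_continuous_on:
  assumes "primitive_on a b F f"
  shows "continuous_on {a..b} F"
proof -
  have "f integrable_on {a..b}"
    using primitive_on_integrable[OF assms] by simp
  then have "continuous_on {a..b} (\<lambda>t. F a + integral {a..t} f)"
    using continuous_on_add[OF continuous_on_const indefinite_integral_continuous_1] by blast
  then show ?thesis
    by (rule continuous_on_eq) (use primitive_onD[OF assms, of a] in force)
qed

lemma primitive_on_has_real_derivative:
  assumes "\<And>s. (F has_real_derivative f s) (at s)" "continuous_on {a..b} f"
  shows "primitive_on a b F f"
  unfolding primitive_on_def
proof (intro conjI allI impI)
  show "f absolutely_integrable_on {a..b}"
    using assms(2) by (rule absolutely_integrable_continuous_real)
  fix x y assume "a \<le> x" "x \<le> y" "y \<le> b"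
  then have "(f has_integral F y - F x) {x..y}"
    using assms(1)
    by (intro fundamental_theorem_of_calculus)
      (auto intro: has_field_derivative_at_within simp: has_real_derivative_iff_has_vector_derivative[symmetric])
  then show "F y - F x = integral {x..y} f"
    by (simp add: integral_unique)
qed

lemma absolutely_integrable_mult_continuous:
  fixes f g :: "real \<Rightarrow> real"
  assumes "f absolutely_integrable_on {a..b}" "continuous_on {a..b} g"
  shows "(\<lambda>x. f x * g x) absolutely_integrable_on {a..b}"
proof -
  have "g \<in> borel_measurable (lebesgue_on {a..b})"
    using assms(2) by (rule continuous_imp_measurable_on_sets_lebesgue) simp
  moreover have "bounded (g ` {a..b})"
    using assms(2) by (intro compact_imp_bounded compact_continuous_image) auto
  ultimately have "(\<lambda>x. g x * f x) absolutely_integrable_on {a..b}"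
    using assms(1) by (intro absolutely_integrable_bounded_measurable_product_real) auto
  then show ?thesis by (simp add: mult.commute)
qed

lemma eq_if_increments_dominated:
  fixes D A :: "real \<Rightarrow> real"
  assumes "a \<le> b"
    and mono: "\<And>x y. a \<le> x \<Longrightarrow> x \<le> y \<Longrightarrow> y \<le> b \<Longrightarrow> A x \<le> A y"
    and small: "\<And>\<epsilon>. 0 < \<epsilon> \<Longrightarrow> \<exists>\<delta>>0. \<forall>x y. a \<le> x \<longrightarrow> x \<le> y \<longrightarrow> y \<le> b \<longrightarrow> y - x < \<delta> \<longrightarrow>
                   \<bar>D y - D x\<bar> \<le> \<epsilon> * (A y - A x)"
  shows "D b = D a"
proof -
  have bound: "\<bar>D b - D a\<bar> \<le> \<epsilon> * (A b - A a)" if \<epsilon>: "0 < \<epsilon>" for \<epsilon>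
  proof -
    obtain \<delta> where "0 < \<delta>" and \<delta>: "\<forall>x y. a \<le> x \<longrightarrow> x \<le> y \<longrightarrow> y \<le> b \<longrightarrow> y - x < \<delta> \<longrightarrow>
                   \<bar>D y - D x\<bar> \<le> \<epsilon> * (A y - A x)"
      using small[OF \<epsilon>] by blast
    obtain p where p: "p tagged_division_of {a..b}" "(\<lambda>x. ball x (\<delta> / 2)) fine p"
      using fine_division_exists_real[OF gauge_ball[of "\<delta> / 2"]] \<open>0 < \<delta>\<close> by auto
    have step: "\<bar>D (Sup K) - D (Inf K)\<bar> \<le> \<epsilon> * (A (Sup K) - A (Inf K))" if xK: "(x, K) \<in> p" for x K
    proof -
      obtain u v where K: "K = {u..v}" "x \<in> K" "K \<subseteq> {a..b}" "K \<subseteq> ball x (\<delta> / 2)"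
        using tagged_division_ofD(2-4)[OF p(1) xK] fineD[OF p(2) xK] by (metis box_real(2))
      then have "u \<in> K" "v \<in> K" "u \<le> v" "a \<le> u" "v \<le> b"
        by auto
      then have "dist x u < \<delta> / 2" "dist x v < \<delta> / 2"
        using K(4) by auto
      then have "v - u < \<delta>"
        by (auto simp: dist_real_def abs_if split: if_splits)
      with \<delta> K(1) \<open>u \<le> v\<close> \<open>a \<le> u\<close> \<open>v \<le> b\<close> show ?thesis by simp
    qed
    have "\<bar>D b - D a\<bar> = \<bar>\<Sum>(x, K)\<in>p. D (Sup K) - D (Inf K)\<bar>"
      using additive_tagged_division_1[OF \<open>a \<le> b\<close> p(1), of D] by simp
    also have "\<dots> \<le> (\<Sum>(x, K)\<in>p. \<bar>D (Sup K) - D (Inf K)\<bar>)"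
      by (rule order_trans[OF sum_abs]) (simp add: case_prod_unfold)
    also have "\<dots> \<le> (\<Sum>(x, K)\<in>p. \<epsilon> * (A (Sup K) - A (Inf K)))"
      using step by (intro sum_mono) auto
    also have "\<dots> = \<epsilon> * (A b - A a)"
      using additive_tagged_division_1[OF \<open>a \<le> b\<close> p(1), of A]
      by (simp add: sum_distrib_left[symmetric] case_prod_unfold)
    finally show ?thesis .
  qed
  have "\<bar>D b - D a\<bar> \<le> 0 + \<eta>" if "0 < \<eta>" for \<eta>
  proof -
    have "0 \<le> A b - A a"
      using mono[of a b] \<open>a \<le> b\<close> by simp
    then have "\<eta> / (A b - A a + 1) * (A b - A a) \<le> \<eta>"
      using that by (simp add: field_simps)
    then show ?thesis
      using bound[of "\<eta> / (A b - A a + 1)"] that \<open>0 \<le> A b - A a\<close> by simp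
  qed
  then show ?thesis
    using field_le_epsilon[of "\<bar>D b - D a\<bar>" 0] by simp
qed

lemma primitive_onI_approx:
  fixes F f w :: "real \<Rightarrow> real"
  assumes f: "f absolutely_integrable_on {a..b}"
    and w: "w integrable_on {a..b}" "\<And>t. t \<in> {a..b} \<Longrightarrow> 0 \<le> w t"
    and approx: "\<And>\<epsilon>. 0 < \<epsilon> \<Longrightarrow> \<exists>\<delta>>0. \<forall>x y. a \<le> x \<longrightarrow> x \<le> y \<longrightarrow> y \<le> b \<longrightarrow> y - x < \<delta> \<longrightarrow>
                   \<bar>F y - F x - integral {x..y} f\<bar> \<le> \<epsilon> * integral {x..y} w"
  shows "primitive_on a b F f"
  unfolding primitive_on_def
proof (intro conjI allI impI)
  have fi: "f integrable_on {a..b}"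
    using f by (rule set_lebesgue_integral_eq_integral(1))
  fix x y assume xy: "a \<le> x" "x \<le> y" "y \<le> b"
  define D where "D t = F t - integral {a..t} f" for t
  define A where "A t = integral {a..t} w" for t
  have A: "A t - A s = integral {s..t} w" and D: "D t - D s = F t - F s - integral {s..t} f"
    if "x \<le> s" "s \<le> t" "t \<le> y" for s t
    using that xy integral_Icc_diff[OF w(1), of s t] integral_Icc_diff[OF fi, of s t]
    by (simp_all add: A_def D_def)
  have "D y = D x"
  proof (rule eq_if_increments_dominated[OF \<open>x \<le> y\<close>])
    fix s t assume "x \<le> s" "s \<le> t" "t \<le> y"
    moreover have "0 \<le> integral {s..t} w"
      using \<open>x \<le> s\<close> \<open>s \<le> t\<close> \<open>t \<le> y\<close> xy w
      by (intro Henstock_Kurzweil_Integration.integral_nonneg integrable_subinterval_real[OF w(1)]) auto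
    ultimately show "A s \<le> A t"
      using A by fastforce
  next
    fix \<epsilon> :: real assume "0 < \<epsilon>"
    then obtain \<delta> where "0 < \<delta>" and \<delta>: "\<forall>s t. a \<le> s \<longrightarrow> s \<le> t \<longrightarrow> t \<le> b \<longrightarrow> t - s < \<delta> \<longrightarrow>
                   \<bar>F t - F s - integral {s..t} f\<bar> \<le> \<epsilon> * integral {s..t} w"
      using approx by blast
    show "\<exists>\<delta>>0. \<forall>s t. x \<le> s \<longrightarrow> s \<le> t \<longrightarrow> t \<le> y \<longrightarrow> t - s < \<delta> \<longrightarrow> \<bar>D t - D s\<bar> \<le> \<epsilon> * (A t - A s)"
    proof (intro exI[of _ \<delta>] conjI allI impI)
      fix s t assume st: "x \<le> s" "s \<le> t" "t \<le> y" "t - s < \<delta>"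
      then have "a \<le> s" "t \<le> b"
        using xy by linarith+
      with st \<delta> show "\<bar>D t - D s\<bar> \<le> \<epsilon> * (A t - A s)"
        by (simp add: A D)
    qed (fact \<open>0 < \<delta>\<close>)
  qed
  then show "F y - F x = integral {x..y} f"
    using D[of x y] xy by simp
qed (fact f)

lemma primitive_on_mult_increment:
  assumes G: "primitive_on a b G g" and H: "primitive_on a b H h"
    and k: "k integrable_on {x..y}" and xy: "a \<le> x" "x \<le> y" "y \<le> b"
  shows "G y * H y - G x * H x - integral {x..y} k =
    integral {x..y} (\<lambda>t. G y * h t + H x * g t - k t)"
proof -
  have "g integrable_on {x..y}" "h integrable_on {x..y}"
    using primitive_on_integrable[OF G] primitive_on_integrable[OF H] xy by auto
  then have "integral {x..y} (\<lambda>t. G y * h t + H x * g t - k t) =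
      G y * integral {x..y} h + H x * integral {x..y} g - integral {x..y} k"
    using k by (simp add: integral_diff integral_add integrable_add integrable_on_mult_right)
  also have "\<dots> = G y * (H y - H x) + H x * (G y - G x) - integral {x..y} k"
    using primitive_onD[OF G xy] primitive_onD[OF H xy] by simp
  finally show ?thesis
    by (simp add: algebra_simps)
qed

lemma primitive_on_mult:
  assumes G: "primitive_on a b G g" and H: "primitive_on a b H h"
  shows "primitive_on a b (\<lambda>t. G t * H t) (\<lambda>t. g t * H t + G t * h t)"
proof (rule primitive_onI_approx[where w = "\<lambda>t. \<bar>g t\<bar> + \<bar>h t\<bar>"])
  have g: "g absolutely_integrable_on {a..b}" and h: "h absolutely_integrable_on {a..b}"
    using G H by (simp_all add: primitive_on_def)
  have Gc: "continuous_on {a..b} G" and Hc: "continuous_on {a..b} H"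
    using G H by (simp_all add: primitive_on_continuous_on)
  have "(\<lambda>t. h t * G t) absolutely_integrable_on {a..b}"
    using h Gc by (rule absolutely_integrable_mult_continuous)
  then show k: "(\<lambda>t. g t * H t + G t * h t) absolutely_integrable_on {a..b}"
    using absolutely_integrable_mult_continuous[OF g Hc]
    by (simp add: mult.commute[of "G _"] set_integral_add(1))
  show "(\<lambda>t. \<bar>g t\<bar> + \<bar>h t\<bar>) integrable_on {a..b}"
    using g h by (auto simp: absolutely_integrable_on_def intro: integrable_add)
  show "\<And>t. 0 \<le> \<bar>g t\<bar> + \<bar>h t\<bar>" by simp
  fix \<epsilon> :: real assume "0 < \<epsilon>"
  obtain \<delta>G where "0 < \<delta>G" and \<delta>G: "\<forall>s\<in>{a..b}. \<forall>t\<in>{a..b}. dist t s < \<delta>G \<longrightarrow> dist (G t) (G s) < \<epsilon>"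
    using compact_uniformly_continuous[OF Gc] \<open>0 < \<epsilon>\<close> unfolding uniformly_continuous_on_def by fastforce
  obtain \<delta>H where "0 < \<delta>H" and \<delta>H: "\<forall>s\<in>{a..b}. \<forall>t\<in>{a..b}. dist t s < \<delta>H \<longrightarrow> dist (H t) (H s) < \<epsilon>"
    using compact_uniformly_continuous[OF Hc] \<open>0 < \<epsilon>\<close> unfolding uniformly_continuous_on_def by fastforce
  show "\<exists>\<delta>>0. \<forall>x y. a \<le> x \<longrightarrow> x \<le> y \<longrightarrow> y \<le> b \<longrightarrow> y - x < \<delta> \<longrightarrow>
      \<bar>G y * H y - G x * H x - integral {x..y} (\<lambda>t. g t * H t + G t * h t)\<bar>
        \<le> \<epsilon> * integral {x..y} (\<lambda>t. \<bar>g t\<bar> + \<bar>h t\<bar>)"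
  proof (intro exI[of _ "min \<delta>G \<delta>H"] conjI allI impI)
    fix x y assume xy: "a \<le> x" "x \<le> y" "y \<le> b" "y - x < min \<delta>G \<delta>H"
    have sub: "{x..y} \<subseteq> {a..b}" using xy by auto
    define r where "r t = G y * h t + H x * g t - (g t * H t + G t * h t)" for t
    have ki: "(\<lambda>t. g t * H t + G t * h t) integrable_on {x..y}"
      using k sub by (meson integrable_subinterval_real set_lebesgue_integral_eq_integral(1))
    then have ri: "r integrable_on {x..y}"
      unfolding r_def using primitive_on_integrable[OF G sub] primitive_on_integrable[OF H sub]
      by (intro integrable_diff[OF _ ki] integrable_add integrable_on_mult_right)
    have wi: "(\<lambda>t. \<bar>g t\<bar> + \<bar>h t\<bar>) integrable_on {x..y}"
      using g h sub by (auto simp: absolutely_integrable_on_def intro!: integrable_add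
          intro: integrable_subinterval_real)
    have "norm (r t) \<le> \<epsilon> * (\<bar>g t\<bar> + \<bar>h t\<bar>)" if "t \<in> {x..y}" for t
    proof -
      have "\<bar>G y - G t\<bar> \<le> \<epsilon>" "\<bar>H x - H t\<bar> \<le> \<epsilon>"
        using \<delta>G \<delta>H that xy by (auto simp: dist_real_def intro!: less_imp_le)
      have "norm (r t) \<le> \<bar>(G y - G t) * h t\<bar> + \<bar>(H x - H t) * g t\<bar>"
        unfolding r_def real_norm_def by (rule order_trans[OF _ abs_triangle_ineq]) (simp add: algebra_simps)
      also have "\<dots> \<le> \<epsilon> * \<bar>h t\<bar> + \<epsilon> * \<bar>g t\<bar>"
        unfolding abs_mult using \<open>\<bar>G y - G t\<bar> \<le> \<epsilon>\<close> \<open>\<bar>H x - H t\<bar> \<le> \<epsilon>\<close>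
        by (intro add_mono mult_right_mono) auto
      finally show ?thesis
        by (simp add: algebra_simps)
    qed
    then have "\<bar>integral {x..y} r\<bar> \<le> integral {x..y} (\<lambda>t. \<epsilon> * (\<bar>g t\<bar> + \<bar>h t\<bar>))"
      using integral_norm_bound_integral[OF ri integrable_on_mult_right[OF wi]] by simp
    then show "\<bar>G y * H y - G x * H x - integral {x..y} (\<lambda>t. g t * H t + G t * h t)\<bar>
        \<le> \<epsilon> * integral {x..y} (\<lambda>t. \<bar>g t\<bar> + \<bar>h t\<bar>)"
      using primitive_on_mult_increment[OF G H ki xy(1-3)] by (simp add: r_def[abs_def])
  qed (use \<open>0 < \<delta>G\<close> \<open>0 < \<delta>H\<close> in simp)
qed

lemma mean_value_closed_segment:
  fixes F f :: "real \<Rightarrow> real"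
  assumes "\<And>s. (F has_real_derivative f s) (at s)"
  obtains \<xi> where "\<xi> \<in> closed_segment u v" "F v - F u = f \<xi> * (v - u)"
proof (cases u v rule: linorder_cases)
  case less
  then obtain \<xi> where "u < \<xi>" "\<xi> < v" "F v - F u = (v - u) * f \<xi>"
    using MVT2[of u v F f] assms by blast
  then show ?thesis
    using that[of \<xi>] less by (simp add: closed_segment_eq_real_ivl mult.commute)
next
  case equal
  then show ?thesis
    using that[of u] by simp
next
  case greater
  then obtain \<xi> where "v < \<xi>" "\<xi> < u" "F u - F v = (u - v) * f \<xi>"
    using MVT2[of v u F f] assms by blast
  then show ?thesis
    using that[of \<xi>] greater by (simp add: closed_segment_eq_real_ivl algebra_simps)
qed

lemma primitive_on_compose_increment:
  fixes F f z z' :: "real \<Rightarrow> real"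
  assumes F: "\<And>s. (F has_real_derivative f s) (at s)" and z: "primitive_on a b z z'"
    and g: "(\<lambda>t. f (z t) * z' t) integrable_on {x..y}" and xy: "a \<le> x" "x \<le> y" "y \<le> b"
  obtains s where "s \<in> {x..y}" "F (z y) - F (z x) - integral {x..y} (\<lambda>t. f (z t) * z' t) =
    integral {x..y} (\<lambda>t. (f (z s) - f (z t)) * z' t)"
proof -
  have sub: "{x..y} \<subseteq> {a..b}"
    using xy by auto
  obtain \<xi> where \<xi>: "\<xi> \<in> closed_segment (z x) (z y)" "F (z y) - F (z x) = f \<xi> * (z y - z x)"
    using mean_value_closed_segment[OF F] by blast
  have "continuous_on (closed_segment x y) z"
    using continuous_on_subset[OF primitive_on_continuous_on[OF z] sub] xy
    by (simp add: closed_segment_eq_real_ivl)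
  then obtain s where s: "s \<in> {x..y}" "z s = \<xi>"
    using IVT'_closed_segment_real[where f = z and a = x and b = y, OF \<xi>(1)] xy
    by (auto simp: closed_segment_eq_real_ivl)
  have "F (z y) - F (z x) - integral {x..y} (\<lambda>t. f (z t) * z' t)
      = f (z s) * integral {x..y} z' - integral {x..y} (\<lambda>t. f (z t) * z' t)"
    using \<xi>(2) s(2) primitive_onD[OF z xy] by simp
  also have "\<dots> = integral {x..y} (\<lambda>t. (f (z s) - f (z t)) * z' t)"
    using g primitive_on_integrable[OF z sub]
    by (simp add: left_diff_distrib integral_diff integrable_on_mult_right)
  finally show ?thesis
    using that s(1) by blast
qed

lemma primitive_on_compose:
  fixes F f z z' :: "real \<Rightarrow> real"
  assumes F: "\<And>s. (F has_real_derivative f s) (at s)" and f: "continuous_on UNIV f"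
    and z: "primitive_on a b z z'"
  shows "primitive_on a b (\<lambda>t. F (z t)) (\<lambda>t. f (z t) * z' t)"
proof (rule primitive_onI_approx[where w = "\<lambda>t. \<bar>z' t\<bar>"])
  have fz: "continuous_on {a..b} (\<lambda>t. f (z t))"
    by (rule continuous_on_compose2[OF f primitive_on_continuous_on[OF z]]) auto
  have z': "z' absolutely_integrable_on {a..b}"
    using z by (simp add: primitive_on_def)
  show "(\<lambda>t. f (z t) * z' t) absolutely_integrable_on {a..b}"
    using absolutely_integrable_mult_continuous[OF z' fz] by (simp add: mult.commute)
  then have g: "(\<lambda>t. f (z t) * z' t) integrable_on {a..b}"
    by (rule set_lebesgue_integral_eq_integral(1))
  show z'i: "(\<lambda>t. \<bar>z' t\<bar>) integrable_on {a..b}"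
    using z' by (simp add: absolutely_integrable_on_def)
  show "\<And>t. t \<in> {a..b} \<Longrightarrow> 0 \<le> \<bar>z' t\<bar>"
    by simp
  fix \<epsilon> :: real assume "0 < \<epsilon>"
  then obtain \<delta> where "0 < \<delta>"
    and \<delta>: "\<forall>s\<in>{a..b}. \<forall>t\<in>{a..b}. dist t s < \<delta> \<longrightarrow> dist (f (z t)) (f (z s)) < \<epsilon>"
    using compact_uniformly_continuous[OF fz] unfolding uniformly_continuous_on_def by fastforce
  show "\<exists>\<delta>>0. \<forall>x y. a \<le> x \<longrightarrow> x \<le> y \<longrightarrow> y \<le> b \<longrightarrow> y - x < \<delta> \<longrightarrow>
      \<bar>F (z y) - F (z x) - integral {x..y} (\<lambda>t. f (z t) * z' t)\<bar> \<le> \<epsilon> * integral {x..y} (\<lambda>t. \<bar>z' t\<bar>)"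
  proof (intro exI[of _ \<delta>] conjI allI impI)
    fix x y assume xy: "a \<le> x" "x \<le> y" "y \<le> b" "y - x < \<delta>"
    then have sub: "{x..y} \<subseteq> {a..b}" by auto
    have gi: "(\<lambda>t. f (z t) * z' t) integrable_on {x..y}"
      using integrable_subinterval_real[OF g sub] .
    obtain s where s: "s \<in> {x..y}" and eq: "F (z y) - F (z x) - integral {x..y} (\<lambda>t. f (z t) * z' t)
        = integral {x..y} (\<lambda>t. (f (z s) - f (z t)) * z' t)"
      using primitive_on_compose_increment[OF F z gi xy(1-3)] .
    have "norm ((f (z s) - f (z t)) * z' t) \<le> \<epsilon> * \<bar>z' t\<bar>" if "t \<in> {x..y}" for t
    proof -
      have "\<bar>f (z s) - f (z t)\<bar> < \<epsilon>"
        using \<delta> s that sub xy by (auto simp: dist_real_def)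
      then show ?thesis
        by (simp add: abs_mult mult_right_mono)
    qed
    moreover have "(\<lambda>t. (f (z s) - f (z t)) * z' t) integrable_on {x..y}"
      using integrable_diff[OF integrable_on_mult_right[OF primitive_on_integrable[OF z sub], of "f (z s)"] gi]
      by (simp add: left_diff_distrib)
    ultimately have "norm (integral {x..y} (\<lambda>t. (f (z s) - f (z t)) * z' t))
        \<le> integral {x..y} (\<lambda>t. \<epsilon> * \<bar>z' t\<bar>)"
      using integrable_on_mult_right[OF integrable_subinterval_real[OF z'i sub]]
      by (intro integral_norm_bound_integral) auto
    then show "\<bar>F (z y) - F (z x) - integral {x..y} (\<lambda>t. f (z t) * z' t)\<bar> \<le> \<epsilon> * integral {x..y} (\<lambda>t. \<bar>z' t\<bar>)"
      by (simp add: eq)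
  qed (fact \<open>0 < \<delta>\<close>)
qed

section \<open>Weak derivatives and primitives\<close>

lemma primitive_on_integral_deriv_test_fun:
  assumes F: "primitive_on a b F f" and \<theta>: "test_fun a b \<theta>"
  shows "integral {a..b} (\<lambda>x. F x * deriv \<theta> x) = - integral {a..b} (\<lambda>x. f x * \<theta> x)"
proof -
  obtain c d where cd: "a < c" "c \<le> d" "d < b" "\<And>x. x \<notin> {c..d} \<Longrightarrow> \<theta> x = 0"
    using \<theta> unfolding test_fun_def by blast
  have smooth: "smooth_fun \<theta>"
    using \<theta> by (simp add: test_fun_def)
  have \<theta>': "continuous_on {a..b} (deriv \<theta>)"
    using smooth_fun_continuous_on[OF smooth_fun_deriv[OF smooth]] .
  have "primitive_on a b \<theta> (deriv \<theta>)"
    using smooth_fun_has_real_derivative[OF smooth] \<theta>' by (rule primitive_on_has_real_derivative)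
  from primitive_onD[OF primitive_on_mult[OF F this], of a b] cd
  have "integral {a..b} (\<lambda>t. f t * \<theta> t + F t * deriv \<theta> t) = 0"
    by simp
  moreover have "(\<lambda>t. f t * \<theta> t) integrable_on {a..b}"
    using F smooth_fun_continuous_on[OF smooth]
    by (intro set_lebesgue_integral_eq_integral(1) absolutely_integrable_mult_continuous)
      (simp_all add: primitive_on_def)
  moreover have "(\<lambda>t. F t * deriv \<theta> t) integrable_on {a..b}"
    using primitive_on_continuous_on[OF F] \<theta>'
    by (intro integrable_continuous_interval continuous_on_mult)
  ultimately show ?thesis
    by (simp add: integral_add)
qed

lemma weighted_mean_close:
  fixes z w :: "real \<Rightarrow> real"
  assumes w: "w integrable_on S" "\<And>x. x \<in> S \<Longrightarrow> 0 \<le> w x" "integral S w = 1"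
    and zw: "(\<lambda>x. z x * w x) integrable_on S"
    and close: "\<And>x. x \<in> S \<Longrightarrow> w x \<noteq> 0 \<Longrightarrow> \<bar>z x - c\<bar> \<le> \<eta>"
  shows "\<bar>integral S (\<lambda>x. z x * w x) - c\<bar> \<le> \<eta>"
proof -
  have cw: "(\<lambda>x. c * w x) integrable_on S"
    using w(1) by (rule integrable_on_mult_right)
  have "norm (integral S (\<lambda>x. z x * w x - c * w x)) \<le> integral S (\<lambda>x. \<eta> * w x)"
  proof (rule integral_norm_bound_integral)
    show "(\<lambda>x. z x * w x - c * w x) integrable_on S"
      using zw cw by (rule integrable_diff)
    show "(\<lambda>x. \<eta> * w x) integrable_on S"
      using w(1) by (rule integrable_on_mult_right)
    fix x assume "x \<in> S"
    then show "norm (z x * w x - c * w x) \<le> \<eta> * w x"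
      using close[of x] w(2)[of x]
      by (cases "w x = 0") (auto simp: abs_mult left_diff_distrib[symmetric] mult_right_mono)
  qed
  moreover have "integral S (\<lambda>x. z x * w x - c * w x) = integral S (\<lambda>x. z x * w x) - c"
    using integral_diff[OF zw cw] w(3) by simp
  ultimately show ?thesis
    using w(3) by simp
qed

lemma eq_if_zero_weak_deriv_interior:
  fixes Z :: "real \<Rightarrow> real"
  assumes Z: "continuous_on {a..b} Z"
    and zero: "\<And>\<theta>. test_fun a b \<theta> \<Longrightarrow> integral {a..b} (\<lambda>x. Z x * deriv \<theta> x) = 0"
    and xy: "a < x" "x \<le> y" "y < b"
  shows "Z x = Z y"
proof -
  have "\<bar>Z x - Z y\<bar> \<le> 2 * \<eta>" if "0 < \<eta>" for \<eta>
  proof -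
    obtain \<delta> where "0 < \<delta>" and \<delta>: "\<forall>s\<in>{a..b}. \<forall>t\<in>{a..b}. dist t s < \<delta> \<longrightarrow> dist (Z t) (Z s) < \<eta>"
      using compact_uniformly_continuous[OF Z] \<open>0 < \<eta>\<close> unfolding uniformly_continuous_on_def by fastforce
    define e where "e = min \<delta> (b - y) / 2"
    have e: "0 < e" "e < \<delta>" "y + e < b"
      using \<open>0 < \<delta>\<close> xy by (auto simp: e_def min_def field_simps)
    have mean: "\<bar>integral {a..b} (\<lambda>t. Z t * mollifier s e t) - Z s\<bar> \<le> \<eta>" if "s \<in> {x, y}" for s
    proof (rule weighted_mean_close)
      show "mollifier s e integrable_on {a..b}" "(\<lambda>t. Z t * mollifier s e t) integrable_on {a..b}"
        using Z continuous_on_mollifier e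
        by (auto intro!: integrable_continuous_interval continuous_on_mult)
      show "\<And>t. 0 \<le> mollifier s e t"
        using e by (simp add: mollifier_nonneg)
      show "integral {a..b} (mollifier s e) = 1"
        using that xy e by (intro integral_mollifier) auto
      fix t assume "t \<in> {a..b}" "mollifier s e t \<noteq> 0"
      then have "s < t" "t < s + e"
        using mollifier_eq_0[OF e(1)] by fastforce+
      then have "dist t s < \<delta>"
        using e by (simp add: dist_real_def)
      moreover have "s \<in> {a..b}"
        using that xy by auto
      ultimately show "\<bar>Z t - Z s\<bar> \<le> \<eta>"
        using \<delta> \<open>t \<in> {a..b}\<close> by (metis dist_real_def less_imp_le)
    qed
    have "test_fun a b (plateau x y e)"
      using xy e by (intro test_fun_plateau) auto
    \<comment> \<open>the plateau over \<open>[x, y]\<close> compares the averages of \<open>Z\<close> near \<open>x\<close> and near \<open>y\<close>\<close>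
    then have "integral {a..b} (\<lambda>t. Z t * (mollifier x e t - mollifier y e t)) = 0"
      using zero deriv_plateau[OF e(1)] by metis
    then have "integral {a..b} (\<lambda>t. Z t * mollifier x e t) = integral {a..b} (\<lambda>t. Z t * mollifier y e t)"
      using Z continuous_on_mollifier e
      by (simp add: right_diff_distrib integral_diff integrable_continuous_interval continuous_on_mult)
    then show ?thesis
      using mean[of x] mean[of y] by simp
  qed
  from this[of "\<bar>Z x - Z y\<bar> / 4"] show ?thesis
    by (cases "Z x = Z y") auto
qed

lemma const_if_zero_weak_deriv:
  fixes Z :: "real \<Rightarrow> real"
  assumes Z: "continuous_on {a..b} Z"
    and zero: "\<And>\<theta>. test_fun a b \<theta> \<Longrightarrow> integral {a..b} (\<lambda>x. Z x * deriv \<theta> x) = 0"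
    and xy: "x \<in> {a..b}" "y \<in> {a..b}"
  shows "Z x = Z y"
proof (cases "a < b")
  case ab: True
  define m where "m = (a + b) / 2"
  have m: "a < m" "m < b"
    using ab by (simp_all add: m_def)
  have "Z t = Z m" if "t \<in> closure {a<..<b}" for t
  proof (rule continuous_constant_on_closure[OF _ _ that])
    show "continuous_on (closure {a<..<b}) Z"
      using Z ab by simp
    fix t assume t: "t \<in> {a<..<b}"
    show "Z t = Z m"
    proof (cases "t \<le> m")
      case True
      then show ?thesis
        using eq_if_zero_weak_deriv_interior[OF Z zero, of t m] t m by simp
    next
      case False
      then show ?thesis
        using eq_if_zero_weak_deriv_interior[OF Z zero, of m t] t m by simp
    qed
  qed
  then have "Z x = Z m" "Z y = Z m"
    using xy closure_greaterThanLessThan[OF ab] by simp_all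
  then show ?thesis
    by simp
next
  case False
  with xy have "x = y"
    by (auto intro!: order.antisym)
  then show ?thesis
    by simp
qed

lemma weak_deriv_imp_primitive_on:
  fixes z z' :: "real \<Rightarrow> real"
  assumes z: "continuous_on {a..b} z" and z': "z' absolutely_integrable_on {a..b}"
    and weak: "\<And>\<theta>. test_fun a b \<theta> \<Longrightarrow>
      integral {a..b} (\<lambda>x. z x * deriv \<theta> x) = - integral {a..b} (\<lambda>x. z' x * \<theta> x)"
  shows "primitive_on a b z z'"
proof -
  define G where "G t = integral {a..t} z'" for t
  have G: "primitive_on a b G z'"
    unfolding G_def using z' by (rule primitive_on_indefinite_integral)
  have "integral {a..b} (\<lambda>x. (z x - G x) * deriv \<theta> x) = 0" if \<theta>: "test_fun a b \<theta>" for \<theta>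
  proof -
    have "continuous_on {a..b} (deriv \<theta>)"
      using \<theta> by (simp add: test_fun_def smooth_fun_continuous_on smooth_fun_deriv)
    then have "(\<lambda>x. z x * deriv \<theta> x) integrable_on {a..b}" "(\<lambda>x. G x * deriv \<theta> x) integrable_on {a..b}"
      using z primitive_on_continuous_on[OF G]
      by (auto intro!: integrable_continuous_interval continuous_on_mult)
    then show ?thesis
      using weak[OF \<theta>] primitive_on_integral_deriv_test_fun[OF G \<theta>]
      by (simp add: left_diff_distrib integral_diff)
  qed
  then have const: "z x - G x = z y - G y" if "x \<in> {a..b}" "y \<in> {a..b}" for x y
    using z primitive_on_continuous_on[OF G] that
    by (intro const_if_zero_weak_deriv[where Z = "\<lambda>t. z t - G t"] continuous_on_diff) auto
  show ?thesis
    unfolding primitive_on_def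
  proof (intro conjI allI impI)
    fix x y assume "a \<le> x" "x \<le> y" "y \<le> b"
    then show "z y - z x = integral {x..y} z'"
      using const[of x y] primitive_onD[OF G] by force
  qed (fact z')
qed

section \<open>Lebesgue integrals over open intervals\<close>

lemma set_integrable_lborel_Ioo:
  fixes f :: "real \<Rightarrow> real"
  assumes "set_integrable lborel {a<..<b} f"
  shows "f absolutely_integrable_on {a..b}" "(LINT x:{a<..<b}|lborel. f x) = integral {a..b} f"
proof -
  have "(\<lambda>x. indicator {a<..<b} x *\<^sub>R f x) \<in> borel_measurable lborel"
    using assms unfolding set_integrable_def by (rule borel_measurable_integrable)
  then have "f absolutely_integrable_on {a<..<b}"
    using assms unfolding set_integrable_def by (simp add: integrable_completion)
  then show "f absolutely_integrable_on {a..b}"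
    using absolutely_integrable_on_open_interval[of a b f] by simp
  show "(LINT x:{a<..<b}|lborel. f x) = integral {a..b} f"
    using set_borel_integral_eq_integral(2)[OF assms] integral_open_interval_real[of a b f] by simp
qed

lemma set_integrable_Ioo_continuous:
  fixes f :: "real \<Rightarrow> real"
  shows "continuous_on {a..b} f \<Longrightarrow> set_integrable lborel {a<..<b} f"
  by (rule set_integrable_subset[OF borel_integrable_atLeastAtMost']) auto

lemma set_integrable_mult_L2_on:
  fixes f g :: "real \<Rightarrow> real"
  assumes f: "L2_on S f" and g: "L2_on S g" and S: "S \<in> sets lborel"
  shows "set_integrable lborel S (\<lambda>x. f x * g x)"
proof -
  have "set_integrable lborel S (\<lambda>x. (f x)\<^sup>2 + (g x)\<^sup>2)"
    using f g by (auto simp: L2_on_def)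
  then show ?thesis
    unfolding set_integrable_def
  proof (rule Bochner_Integration.integrable_bound)
    have "(\<lambda>x. (indicator S x *\<^sub>R f x) * (indicator S x *\<^sub>R g x)) \<in> borel_measurable lborel"
      using f g by (intro borel_measurable_times) (auto simp: L2_on_def set_borel_measurable_def)
    then show "(\<lambda>x. indicator S x *\<^sub>R (f x * g x)) \<in> borel_measurable lborel"
      by (rule measurable_cong[THEN iffD1, rotated]) (simp add: indicator_def)
    have "\<bar>f x * g x\<bar> \<le> (f x)\<^sup>2 + (g x)\<^sup>2" for x
    proof -
      have "2 * (\<bar>f x\<bar> * \<bar>g x\<bar>) \<le> (f x)\<^sup>2 + (g x)\<^sup>2"
        using sum_squares_bound[of "\<bar>f x\<bar>" "\<bar>g x\<bar>"] by (simp add: mult.assoc)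
      then show ?thesis
        using abs_mult[of "f x" "g x"] abs_ge_zero[of "f x * g x"] by linarith
    qed
    then show "AE x in lborel. norm (indicator S x *\<^sub>R (f x * g x)) \<le> norm (indicator S x *\<^sub>R ((f x)\<^sup>2 + (g x)\<^sup>2))"
      by (auto simp: indicator_def)
  qed
qed

lemma set_integrable_Ioo_if_L2_on:
  fixes f :: "real \<Rightarrow> real"
  assumes "L2_on {a<..<b} f"
  shows "set_integrable lborel {a<..<b} f"
proof -
  have "L2_on {a<..<b} (\<lambda>_. 1)"
    unfolding L2_on_def set_borel_measurable_def by (auto intro: set_integrable_Ioo_continuous)
  from set_integrable_mult_L2_on[OF this assms] show ?thesis
    by simp
qed

lemma set_integrable_mult_bounded:
  fixes f h :: "real \<Rightarrow> real"
  assumes f: "set_integrable lborel S f" and h: "h \<in> borel_measurable lborel"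
    and bounded: "\<And>x. x \<in> S \<Longrightarrow> \<bar>h x\<bar> \<le> B"
  shows "set_integrable lborel S (\<lambda>x. f x * h x)"
proof -
  have "integrable lborel (\<lambda>x. B * (indicator S x *\<^sub>R \<bar>f x\<bar>))"
    using set_integrable_abs[OF f] unfolding set_integrable_def by (rule integrable_mult_right)
  then show ?thesis
    unfolding set_integrable_def
  proof (rule Bochner_Integration.integrable_bound)
    have "(\<lambda>x. (indicator S x *\<^sub>R f x) * h x) \<in> borel_measurable lborel"
      using borel_measurable_times[OF borel_measurable_integrable[OF f[unfolded set_integrable_def]] h] .
    then show "(\<lambda>x. indicator S x *\<^sub>R (f x * h x)) \<in> borel_measurable lborel"
      by (simp add: mult.assoc)
    have "\<bar>f x * h x\<bar> \<le> \<bar>B * \<bar>f x\<bar>\<bar>" if "x \<in> S" for x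
    proof -
      have "\<bar>f x * h x\<bar> \<le> \<bar>f x\<bar> * B"
        using bounded[OF that] by (simp add: abs_mult mult_left_mono)
      also have "\<dots> \<le> \<bar>B * \<bar>f x\<bar>\<bar>"
        by (metis abs_ge_self mult.commute)
      finally show ?thesis .
    qed
    then show "AE x in lborel. norm (indicator S x *\<^sub>R (f x * h x)) \<le> norm (B * (indicator S x *\<^sub>R \<bar>f x\<bar>))"
      by (auto simp: indicator_def)
  qed
qed

lemma weak_deriv_on_iff_integral:
  fixes f g :: "real \<Rightarrow> real"
  assumes f: "continuous_on {a..b} f" and g: "set_integrable lborel {a<..<b} g"
  shows "weak_deriv_on a b f g \<longleftrightarrow> (\<forall>\<theta>. test_fun a b \<theta> \<longrightarrow>
    integral {a..b} (\<lambda>x. f x * deriv \<theta> x) = - integral {a..b} (\<lambda>x. g x * \<theta> x))"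
proof -
  have f': "set_integrable lborel {a<..<b} f"
    using f by (rule set_integrable_Ioo_continuous)
  have "set_integrable lborel {c..d} f \<and> set_integrable lborel {c..d} g" if "a < c" "d < b" for c d
    using that by (auto intro: set_integrable_subset[OF f'] set_integrable_subset[OF g])
  moreover have "(LINT x:{a<..<b}|lborel. f x * deriv \<theta> x) = integral {a..b} (\<lambda>x. f x * deriv \<theta> x)"
      "(LINT x:{a<..<b}|lborel. g x * \<theta> x) = integral {a..b} (\<lambda>x. g x * \<theta> x)"
    if "test_fun a b \<theta>" for \<theta>
  proof -
    have smooth: "smooth_fun \<theta>"
      using that by (simp add: test_fun_def)
    have "continuous_on {a..b} (\<lambda>x. f x * deriv \<theta> x)"
      using f smooth_fun_continuous_on[OF smooth_fun_deriv[OF smooth]] by (rule continuous_on_mult)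
    then show "(LINT x:{a<..<b}|lborel. f x * deriv \<theta> x) = integral {a..b} (\<lambda>x. f x * deriv \<theta> x)"
      by (intro set_integrable_lborel_Ioo(2) set_integrable_Ioo_continuous)
    obtain B where B: "\<And>x. x \<in> {a..b} \<Longrightarrow> \<bar>\<theta> x\<bar> \<le> B"
      using compact_continuous_image[OF smooth_fun_continuous_on[OF smooth], of "{a..b}"]
      by (metis compact_Icc compact_imp_bounded bounded_real image_eqI)
    have "\<theta> \<in> borel_measurable lborel"
      using smooth_fun_continuous_on[OF smooth] by (simp add: borel_measurable_continuous_onI)
    then have "set_integrable lborel {a<..<b} (\<lambda>x. g x * \<theta> x)"
      using B by (intro set_integrable_mult_bounded[OF g, of _ B]) auto
    then show "(LINT x:{a<..<b}|lborel. g x * \<theta> x) = integral {a..b} (\<lambda>x. g x * \<theta> x)"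
      by (rule set_integrable_lborel_Ioo(2))
  qed
  ultimately show ?thesis
    unfolding weak_deriv_on_def by auto
qed

section \<open>Truncations of \<open>\<phi>\<close>\<close>

lemma H_phi_finite:
  assumes "H_phi \<phi>" "s \<noteq> 0"
  shows "\<phi> s = ereal (real_of_ereal (\<phi> s))"
  using assms by (cases "\<phi> s") (auto simp: H_phi_def)

lemma continuous_on_real_of_ereal_phi:
  assumes "H_phi \<phi>" "0 \<notin> S"
  shows "continuous_on S (\<lambda>t. real_of_ereal (\<phi> t))"
proof (rule continuous_at_imp_continuous_on, rule ballI)
  fix s assume "s \<in> S"
  have "(\<phi> \<longlongrightarrow> \<phi> s) (at s)"
    using assms(1) by (simp add: H_phi_def continuous_on_eq_continuous_at isCont_def)
  then have "(\<phi> \<longlongrightarrow> ereal (real_of_ereal (\<phi> s))) (at s)"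
    using H_phi_finite[OF assms(1)] assms(2) \<open>s \<in> S\<close> by metis
  then show "isCont (\<lambda>t. real_of_ereal (\<phi> t)) s"
    unfolding isCont_def by (rule lim_real_of_ereal)
qed

lemma set_integrable_phi:
  assumes Hp: "H_phi \<phi>" and Hi: "H_int \<phi>"
  shows "0 < s \<Longrightarrow> set_integrable lborel {0<..<s} (\<lambda>t. real_of_ereal (\<phi> t))"
    and "s < 0 \<Longrightarrow> set_integrable lborel {s<..<0} (\<lambda>t. real_of_ereal (\<phi> t))"
proof -
  have near_0: "set_integrable lborel {0<..<1/2} (\<lambda>t. real_of_ereal (\<phi> t))"
       "set_integrable lborel {-(1/2)<..<0} (\<lambda>t. real_of_ereal (\<phi> t))"
    using Hi unfolding H_int_def by (auto dest: spec[of _ "1/2"])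
  have away: "set_integrable lborel {u..v} (\<lambda>t. real_of_ereal (\<phi> t))" if "0 \<notin> {u..v}" for u v
    using continuous_on_real_of_ereal_phi[OF Hp that] by (rule borel_integrable_atLeastAtMost')
  show "set_integrable lborel {0<..<s} (\<lambda>t. real_of_ereal (\<phi> t))" if "0 < s"
  proof -
    have "set_integrable lborel ({0<..<1/2} \<union> {1/2..s}) (\<lambda>t. real_of_ereal (\<phi> t))"
      using near_0(1) away[of "1/2" s] by (intro set_integrable_Un) auto
    then show ?thesis
      by (rule set_integrable_subset) auto
  qed
  show "set_integrable lborel {s<..<0} (\<lambda>t. real_of_ereal (\<phi> t))" if "s < 0"
  proof -
    have "set_integrable lborel ({s..-(1/2)} \<union> {-(1/2)<..<0}) (\<lambda>t. real_of_ereal (\<phi> t))"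
      using near_0(2) away[of s "-(1/2)"] by (intro set_integrable_Un) auto
    then show ?thesis
      by (rule set_integrable_subset) auto
  qed
qed

definition phi_trunc :: "(real \<Rightarrow> ereal) \<Rightarrow> nat \<Rightarrow> real \<Rightarrow> real" where
  "phi_trunc \<phi> n t = real_of_ereal (min (\<phi> t) (ereal (real n)))"

definition psi_trunc :: "(real \<Rightarrow> ereal) \<Rightarrow> nat \<Rightarrow> real \<Rightarrow> real" where
  "psi_trunc \<phi> n s = interval_lebesgue_integral lborel (ereal 0) (ereal s) (phi_trunc \<phi> n)"

lemma continuous_on_phi_trunc:
  assumes "H_phi \<phi>"
  shows "continuous_on UNIV (phi_trunc \<phi> n)"
proof (rule continuous_at_imp_continuous_on, rule ballI)
  fix x :: real
  have "isCont (\<lambda>t. min (\<phi> t) (ereal (real n))) x"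
    using assms by (auto simp: H_phi_def continuous_on_eq_continuous_at intro: continuous_min)
  moreover have "min (\<phi> x) (ereal (real n)) = ereal (phi_trunc \<phi> n x)"
    using assms by (cases "\<phi> x") (auto simp: H_phi_def phi_trunc_def min_def)
  ultimately show "isCont (phi_trunc \<phi> n) x"
    unfolding isCont_def phi_trunc_def[abs_def] by (metis lim_real_of_ereal)
qed

lemma phi_trunc_tendsto:
  assumes "\<phi> s = ereal r"
  shows "(\<lambda>n. phi_trunc \<phi> n s) \<longlonglongrightarrow> r"
proof (rule tendsto_eventually)
  obtain N :: nat where "r \<le> real N"
    using real_arch_simple by blast
  then have "phi_trunc \<phi> n s = r" if "N \<le> n" for n
    using assms that of_nat_mono[OF that] by (simp add: phi_trunc_def min_def)
  then show "\<forall>\<^sub>F n in sequentially. phi_trunc \<phi> n s = r"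
    by (auto simp: eventually_sequentially)
qed

lemma abs_phi_trunc_le: "\<phi> s = ereal r \<Longrightarrow> \<bar>phi_trunc \<phi> n s\<bar> \<le> \<bar>r\<bar>"
  by (auto simp: phi_trunc_def min_def)

lemma phi_trunc_mult_dominated_tendsto:
  assumes "\<phi> s = ereal r"
  shows "(\<forall>n. \<bar>phi_trunc \<phi> n s * c\<bar> \<le> \<bar>r * c\<bar>) \<and> (\<lambda>n. phi_trunc \<phi> n s * c) \<longlonglongrightarrow> r * c"
  using abs_phi_trunc_le[of \<phi> s, OF assms] phi_trunc_tendsto[of \<phi> s, OF assms]
  by (auto simp: abs_mult intro: mult_right_mono tendsto_mult_right)

lemma set_integral_phi_trunc_tendsto:
  assumes Hp: "H_phi \<phi>" and I: "I \<in> sets lborel" "0 \<notin> I"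
    and int: "set_integrable lborel I (\<lambda>t. real_of_ereal (\<phi> t))"
  shows "(\<lambda>n. LINT t:I|lborel. phi_trunc \<phi> n t) \<longlonglongrightarrow> (LINT t:I|lborel. real_of_ereal (\<phi> t))"
  unfolding set_lebesgue_integral_def
proof (rule integral_dominated_convergence[where w = "\<lambda>x. indicator I x *\<^sub>R \<bar>real_of_ereal (\<phi> x)\<bar>"])
  show "(\<lambda>x. indicat_real I x *\<^sub>R real_of_ereal (\<phi> x)) \<in> borel_measurable lborel"
    using int unfolding set_integrable_def by (rule borel_measurable_integrable)
  show "integrable lborel (\<lambda>x. indicat_real I x *\<^sub>R \<bar>real_of_ereal (\<phi> x)\<bar>)"
    using set_integrable_abs[OF int] unfolding set_integrable_def .
  fix n
  have "phi_trunc \<phi> n \<in> borel_measurable lborel"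
    using borel_measurable_continuous_onI[OF continuous_on_phi_trunc[OF Hp]] by simp
  then show "(\<lambda>x. indicat_real I x *\<^sub>R phi_trunc \<phi> n x) \<in> borel_measurable lborel"
    using I by (intro borel_measurable_scaleR borel_measurable_indicator) auto
  have "norm (indicat_real I x *\<^sub>R phi_trunc \<phi> n x) \<le> indicat_real I x *\<^sub>R \<bar>real_of_ereal (\<phi> x)\<bar>" for x
  proof (cases "x \<in> I")
    case True
    with I have "x \<noteq> 0" by auto
    with True show ?thesis
      using abs_phi_trunc_le[of \<phi> x, OF H_phi_finite[OF Hp \<open>x \<noteq> 0\<close>]] by simp
  qed simp
  then show "AE x in lborel. norm (indicat_real I x *\<^sub>R phi_trunc \<phi> n x) \<le> indicat_real I x *\<^sub>R \<bar>real_of_ereal (\<phi> x)\<bar>"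
    by simp
next
  have "(\<lambda>n. indicat_real I x *\<^sub>R phi_trunc \<phi> n x) \<longlonglongrightarrow> indicat_real I x *\<^sub>R real_of_ereal (\<phi> x)" for x
  proof (cases "x \<in> I")
    case True
    with I have "x \<noteq> 0" by auto
    with True show ?thesis
      using phi_trunc_tendsto[of \<phi> x, OF H_phi_finite[OF Hp \<open>x \<noteq> 0\<close>]] by simp
  qed simp
  then show "AE x in lborel. (\<lambda>n. indicat_real I x *\<^sub>R phi_trunc \<phi> n x) \<longlonglongrightarrow> indicat_real I x *\<^sub>R real_of_ereal (\<phi> x)"
    by simp
qed

lemma psi_trunc_tendsto:
  assumes Hp: "H_phi \<phi>" and Hi: "H_int \<phi>"
  shows "(\<lambda>n. psi_trunc \<phi> n s) \<longlonglongrightarrow> psi \<phi> s"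
proof (cases s "0::real" rule: linorder_cases)
  case greater
  then show ?thesis
    using set_integral_phi_trunc_tendsto[OF Hp _ _ set_integrable_phi(1)[OF Hp Hi greater]]
    by (simp add: psi_trunc_def psi_def interval_lebesgue_integral_le_eq)
next
  case less
  then show ?thesis
    using tendsto_minus[OF set_integral_phi_trunc_tendsto[OF Hp _ _ set_integrable_phi(2)[OF Hp Hi less]]]
    by (simp add: psi_trunc_def psi_def interval_lebesgue_integral_gt_eq)
qed (simp add: psi_trunc_def psi_def)

lemma psi_trunc_has_real_derivative:
  assumes "H_phi \<phi>"
  shows "(psi_trunc \<phi> n has_real_derivative phi_trunc \<phi> n s) (at s)"
proof -
  have "(psi_trunc \<phi> n has_vector_derivative phi_trunc \<phi> n s) (at s within {-\<bar>s\<bar> - 1..\<bar>s\<bar> + 1})"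
    unfolding psi_trunc_def[abs_def]
    by (rule interval_integral_FTC2) (auto intro: continuous_on_subset[OF continuous_on_phi_trunc[OF assms]])
  moreover have "at s within {-\<bar>s\<bar> - 1..\<bar>s\<bar> + 1} = at s"
    by (intro at_within_interior) auto
  ultimately show ?thesis
    by (simp add: has_real_derivative_iff_has_vector_derivative)
qed

lemma dominated_convergence_AE:
  fixes f :: "nat \<Rightarrow> real \<Rightarrow> real"
  assumes f: "\<And>k. f k integrable_on S" and h: "h integrable_on S"
    and AE: "AE x in lborel. x \<in> S \<longrightarrow> (\<forall>k. \<bar>f k x\<bar> \<le> h x) \<and> (\<lambda>k. f k x) \<longlonglongrightarrow> g x"
  shows "(\<lambda>k. integral S (f k)) \<longlonglongrightarrow> integral S g"
proof -
  from AE obtain N where "{x \<in> space lborel. \<not> (x \<in> S \<longrightarrow> (\<forall>k. \<bar>f k x\<bar> \<le> h x) \<and> (\<lambda>k. f k x) \<longlonglongrightarrow> g x)} \<subseteq> N"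
    and "emeasure lborel N = 0" "N \<in> sets lborel"
    by (rule AE_E)
  then have N: "N \<in> null_sets lborel"
    by (simp add: null_setsI)
  from \<open>{x \<in> space lborel. _} \<subseteq> N\<close> have good: "\<And>x. x \<notin> N \<Longrightarrow> x \<in> S \<longrightarrow> (\<forall>k. \<bar>f k x\<bar> \<le> h x) \<and> (\<lambda>k. f k x) \<longlonglongrightarrow> g x"
    by auto
  have "negligible N"
    using null_sets_completionI[OF N] by (simp add: negligible_iff_null_sets)
  define f' where "f' k x = (if x \<in> N then 0 else f k x)" for k x
  define g' where "g' x = (if x \<in> N then 0 else g x)" for x
  define h' where "h' x = (if x \<in> N then 0 else h x)" for x
  have "(\<lambda>k. integral S (f' k)) \<longlonglongrightarrow> integral S g'"
  proof (rule dominated_convergence(2))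
    show "f' k integrable_on S" for k
      unfolding f'_def by (rule integrable_spike[OF f \<open>negligible N\<close>]) auto
    show "h' integrable_on S"
      unfolding h'_def by (rule integrable_spike[OF h \<open>negligible N\<close>]) auto
    show "norm (f' k x) \<le> h' x" if "x \<in> S" for k x
      using good[of x] that by (auto simp: f'_def h'_def)
    show "(\<lambda>k. f' k x) \<longlonglongrightarrow> g' x" if "x \<in> S" for x
      using good[of x] that by (auto simp: f'_def g'_def)
  qed
  moreover have "integral S (f' k) = integral S (f k)" for k
    unfolding f'_def by (rule integral_spike[OF \<open>negligible N\<close>]) auto
  moreover have "integral S g' = integral S g"
    unfolding g'_def by (rule integral_spike[OF \<open>negligible N\<close>]) auto
  ultimately show ?thesis
    by simp
qed

lemma primitive_on_psi_compose:
  assumes Hp: "H_phi \<phi>" and Hi: "H_int \<phi>" and z: "primitive_on a b z z'"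
    and g: "(\<lambda>t. real_of_ereal (\<phi> (z t)) * z' t) absolutely_integrable_on {a..b}"
    and finite: "AE t in lborel. t \<in> {a<..<b} \<longrightarrow> \<phi> (z t) < \<infinity>"
  shows "primitive_on a b (\<lambda>t. psi \<phi> (z t)) (\<lambda>t. real_of_ereal (\<phi> (z t)) * z' t)"
  unfolding primitive_on_def
proof (intro conjI allI impI)
  fix x y assume xy: "a \<le> x" "x \<le> y" "y \<le> b"
  have trunc: "primitive_on a b (\<lambda>t. psi_trunc \<phi> n (z t)) (\<lambda>t. phi_trunc \<phi> n (z t) * z' t)" for n
    using psi_trunc_has_real_derivative[OF Hp] continuous_on_phi_trunc[OF Hp] z
    by (rule primitive_on_compose)
  have "(\<lambda>n. psi_trunc \<phi> n (z y) - psi_trunc \<phi> n (z x)) \<longlonglongrightarrow> psi \<phi> (z y) - psi \<phi> (z x)"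
    by (intro tendsto_diff psi_trunc_tendsto[OF Hp Hi])
  moreover have "(\<lambda>n. integral {x..y} (\<lambda>t. phi_trunc \<phi> n (z t) * z' t))
      \<longlonglongrightarrow> integral {x..y} (\<lambda>t. real_of_ereal (\<phi> (z t)) * z' t)"
  proof (rule dominated_convergence_AE)
    show "(\<lambda>t. phi_trunc \<phi> n (z t) * z' t) integrable_on {x..y}" for n
      using primitive_on_integrable[OF trunc] xy by auto
    show "(\<lambda>t. \<bar>real_of_ereal (\<phi> (z t)) * z' t\<bar>) integrable_on {x..y}"
      using g xy by (auto simp: absolutely_integrable_on_def intro: integrable_subinterval_real)
    have "AE t in lborel. t \<noteq> a" "AE t in lborel. t \<noteq> b"
      by (simp_all add: AE_lborel_singleton)
    then show "AE t in lborel. t \<in> {x..y} \<longrightarrow>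
        (\<forall>n. \<bar>phi_trunc \<phi> n (z t) * z' t\<bar> \<le> \<bar>real_of_ereal (\<phi> (z t)) * z' t\<bar>) \<and>
        (\<lambda>n. phi_trunc \<phi> n (z t) * z' t) \<longlonglongrightarrow> real_of_ereal (\<phi> (z t)) * z' t"
      using finite
    proof eventually_elim
      case (elim t)
      show ?case
      proof
        assume "t \<in> {x..y}"
        with elim xy have "\<phi> (z t) = ereal (real_of_ereal (\<phi> (z t)))"
          using Hp by (cases "\<phi> (z t)") (auto simp: H_phi_def)
        then show "(\<forall>n. \<bar>phi_trunc \<phi> n (z t) * z' t\<bar> \<le> \<bar>real_of_ereal (\<phi> (z t)) * z' t\<bar>) \<and>
            (\<lambda>n. phi_trunc \<phi> n (z t) * z' t) \<longlonglongrightarrow> real_of_ereal (\<phi> (z t)) * z' t"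
          by (rule phi_trunc_mult_dominated_tendsto)
      qed
    qed
  qed
  ultimately show "psi \<phi> (z y) - psi \<phi> (z x) = integral {x..y} (\<lambda>t. real_of_ereal (\<phi> (z t)) * z' t)"
    using primitive_onD[OF trunc xy] LIMSEQ_unique by simp
qed (fact g)

theorem mainTheorem14:
  fixes L :: real and \<phi> :: "real \<Rightarrow> ereal" and z z' :: "real \<Rightarrow> real"
  assumes "L > 0"
    and "H_phi \<phi>" and "H_int \<phi>" and "H_bdd \<phi>"
    and "continuous_on {0..L} z"
    and "L2_on {0<..<L} z" and "L2_on {0<..<L} z'" and "weak_deriv_on 0 L z z'"
    and "AE x in lborel. x \<in> {0<..<L} \<longrightarrow> \<phi> (z x) < \<infinity>"
    and "L2_on {0<..<L} (\<lambda>x. real_of_ereal (\<phi> (z x)))"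
  shows "W11_on 0 L (\<lambda>x. psi \<phi> (z x))
    \<and> weak_deriv_on 0 L (\<lambda>x. psi \<phi> (z x)) (\<lambda>x. real_of_ereal (\<phi> (z x)) * z' x)
    \<and> (LINT x:{0<..<L}|lborel. real_of_ereal (\<phi> (z x)) * z' x) = psi \<phi> (z L) - psi \<phi> (z 0)"
proof -
  note Hp = assms(2) and Hi = assms(3) and zc = assms(5) and z'L2 = assms(7)
    and finite = assms(9) and phizL2 = assms(10)
  define g where "g x = real_of_ereal (\<phi> (z x)) * z' x" for x
  have z'L1: "set_integrable lborel {0<..<L} z'"
    using z'L2 by (rule set_integrable_Ioo_if_L2_on)
  have gL1: "set_integrable lborel {0<..<L} g"
    unfolding g_def[abs_def] using phizL2 z'L2 by (intro set_integrable_mult_L2_on) auto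
  have "primitive_on 0 L z z'"
    using zc set_integrable_lborel_Ioo(1)[OF z'L1] \<open>weak_deriv_on 0 L z z'\<close>
    by (intro weak_deriv_imp_primitive_on) (simp_all add: weak_deriv_on_iff_integral[OF zc z'L1])
  then have G: "primitive_on 0 L (\<lambda>x. psi \<phi> (z x)) g"
    unfolding g_def[abs_def] using set_integrable_lborel_Ioo(1)[OF gL1] finite
    by (intro primitive_on_psi_compose[OF Hp Hi]) (simp_all add: g_def[abs_def])
  have weak: "weak_deriv_on 0 L (\<lambda>x. psi \<phi> (z x)) g"
    using primitive_on_integral_deriv_test_fun[OF G]
    by (simp add: weak_deriv_on_iff_integral[OF primitive_on_continuous_on[OF G] gL1])
  moreover have "W11_on 0 L (\<lambda>x. psi \<phi> (z x))"
    unfolding W11_on_def L1_on_def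
    using set_integrable_Ioo_continuous[OF primitive_on_continuous_on[OF G]] gL1 weak by blast
  moreover have "(LINT x:{0<..<L}|lborel. g x) = psi \<phi> (z L) - psi \<phi> (z 0)"
    using set_integrable_lborel_Ioo(2)[OF gL1] primitive_onD[OF G, of 0 L] \<open>L > 0\<close> by simp
  ultimately show ?thesis
    by (simp add: g_def[abs_def])
qed

end
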